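(* Let $f$ be analytic on $\mathbb{D}=\{z\in\mathbb{C}:|z|<1\}$ with $\operatorname{Diam} f(\mathbb{D})\le 2$. Then for all $z\in\mathbb{D}$, \[ |f(z)-f(0)|\le |z|\,\frac{2}{1+\sqrt{1-|z|^2}}. \] Moreover, equality holds in this inequality at some point of $\mathbb{D}\setminus\{0\}$ if and only if $f$ is a linear fractional transformation of the form \[ f(z)=c\,\frac{z-b}{1-\bar b z}+a \] for some constants $a\in\mathbb{C}$, $b\in\mathbb{D}\setminus\{0\}$ and $c\in\mathbb{C}$ with $|c|=1$.
   Context: $\operatorname{Diam} f(\mathbb{D})=\sup_{z,w\in\mathbb{D}}|f(z)-f(w)|$. *)

theory Defs
  imports "HOL-Complex_Analysis.Complex_Analysis"
begin

text \<open>Diameter of the image f(D) as in the paper: the supremum of |f z - f w| over z, w in the disk.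
  The condition "Diam f(D) \<le> 2" is the statement that this supremum (in the extended reals) is at most 2,
  i.e. every |f z - f w| is at most 2.\<close>
definition Diam_le :: "(complex \<Rightarrow> complex) \<Rightarrow> complex set \<Rightarrow> real \<Rightarrow> bool" where
  "Diam_le f S r \<longleftrightarrow> (\<forall>z\<in>S. \<forall>w\<in>S. cmod (f z - f w) \<le> r)"

end

theory Submission
  imports Defs
begin

(* Fix z <> 0 and let sigma be the involutive automorphism of the disk exchanging 0 and z.
   Then g = (f - f o sigma) / 2 maps the disk into the closed unit disk and g o sigma = -g,
   so g z = - g 0 and |f z - f 0| = 2 s with s = |g 0|.  By Schwarz-Pick the pseudo-hyperbolic
   distance 2 s / (1 + s^2) between g 0 and - g 0 is at most |z|; solving this quadratic
   inequality for s gives the bound.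
   In the equality case g is an automorphism of the disk, and F = f o g^-1 still has diameter
   at most 2 while F a - F (-a) = 2 a.  The second-order Schwarz lemma, applied to
   (F u - F (-l u)) / 2 for |l| = 1, shows that F u - u changes only by O(t^2) when u is
   rotated by the angle t, so F u - u is constant and f = g + const is a Moebius map. *)

lemma smaller_root_factorization:
  fixes r s :: real
  assumes "0 < r" "r \<le> 1"
  shows "r * (1 + s\<^sup>2) - 2 * s
    = r * (s - r / (1 + sqrt (1 - r\<^sup>2))) * (s - (1 + sqrt (1 - r\<^sup>2)) / r)"
proof -
  define c where "c = sqrt (1 - r\<^sup>2)"
  have c: "0 \<le> c" "c\<^sup>2 = 1 - r\<^sup>2"
    using assms by (auto simp: c_def abs_square_le_1)
  have sum: "r / (1 + c) + (1 + c) / r = 2 / r"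
    using assms c by (simp add: field_simps power2_eq_square)
  have prod: "r / (1 + c) * ((1 + c) / r) = 1"
    using assms c by simp
  have expand: "r * (s - x) * (s - y) = r * s\<^sup>2 - r * (x + y) * s + r * (x * y)" for x y
    by (simp add: algebra_simps power2_eq_square)
  have "r * (s - r / (1 + c)) * (s - (1 + c) / r) = r * (1 + s\<^sup>2) - 2 * s"
    unfolding expand sum prod using assms by (simp add: algebra_simps)
  then show ?thesis
    unfolding c_def by simp
qed

lemma le_smaller_root_iff:
  fixes r s :: real
  assumes "s \<le> 1" "0 < r" "r < 1"
  shows "2 * s \<le> r * (1 + s\<^sup>2) \<longleftrightarrow> s \<le> r / (1 + sqrt (1 - r\<^sup>2))"
    and "2 * s = r * (1 + s\<^sup>2) \<longleftrightarrow> s = r / (1 + sqrt (1 - r\<^sup>2))"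
proof -
  define \<rho> where "\<rho> = r / (1 + sqrt (1 - r\<^sup>2))"
  define B where "B = r * (s - (1 + sqrt (1 - r\<^sup>2)) / r)"
  have "0 \<le> sqrt (1 - r\<^sup>2)"
    using assms by (simp add: power_le_one)
  moreover have "r * s \<le> r"
    using assms by (simp add: mult_left_le)
  moreover have "B = r * s - (1 + sqrt (1 - r\<^sup>2))"
    using assms by (simp add: B_def right_diff_distrib)
  ultimately have B: "B < 0"
    using assms by linarith
  have "r * (1 + s\<^sup>2) - 2 * s = (s - \<rho>) * B"
    using smaller_root_factorization[OF assms(2) less_imp_le[OF assms(3)], of s]
    unfolding \<rho>_def B_def by (simp only: mult_ac)
  moreover have "0 \<le> (s - \<rho>) * B \<longleftrightarrow> s \<le> \<rho>" and "(s - \<rho>) * B = 0 \<longleftrightarrow> s = \<rho>"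
    using B by (auto simp: zero_le_mult_iff)
  ultimately show "2 * s \<le> r * (1 + s\<^sup>2) \<longleftrightarrow> s \<le> \<rho>" and "2 * s = r * (1 + s\<^sup>2) \<longleftrightarrow> s = \<rho>"
    by linarith+
qed

lemma one_minus_cos_le_half_square: "1 - cos (t::real) \<le> t\<^sup>2 / 2"
proof -
  have "\<bar>sin (t/2)\<bar>\<^sup>2 \<le> \<bar>t/2\<bar>\<^sup>2"
    by (rule power_mono) (use abs_sin_x_le_abs_x[of "t/2"] in auto)
  then show ?thesis
    using cos_double_sin[of "t/2"] by (simp add: power_divide)
qed

lemma norm_unimodular_midpoint:
  assumes "cmod l = 1"
  shows "(cmod ((1 + l) / 2))\<^sup>2 = (1 + Re l) / 2"
    and "l \<noteq> 1 \<Longrightarrow> cmod ((1 + l) / 2) < 1"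
proof -
  have Re_Im: "(Re l)\<^sup>2 + (Im l)\<^sup>2 = 1"
    using assms cmod_power2[of l] by simp
  have "(cmod (1 + l))\<^sup>2 = (1 + Re l)\<^sup>2 + (Im l)\<^sup>2"
    by (simp add: cmod_power2)
  with Re_Im show sq: "(cmod ((1 + l) / 2))\<^sup>2 = (1 + Re l) / 2"
    by (simp add: norm_divide power_divide power2_eq_square algebra_simps)
  assume "l \<noteq> 1"
  with Re_Im have "Re l \<noteq> 1"
    using complex_eqI[of l 1] by auto
  with assms have "Re l < 1"
    using complex_Re_le_cmod[of l] by simp
  with sq have "(cmod ((1 + l) / 2))\<^sup>2 < 1"
    by simp
  then show "cmod ((1 + l) / 2) < 1"
    by (simp add: abs_square_less_1)
qed

lemma Moebius_function_uminus: "Moebius_function 0 w (- z) = - Moebius_function 0 (- w) z"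
  by (simp add: Moebius_function_def minus_divide_left add.commute)

lemma Moebius_function_rotation:
  assumes "cmod \<alpha> = 1"
  shows "Moebius_function 0 (- w) (\<alpha> * z) = \<alpha> * Moebius_function 0 (- cnj \<alpha> * w) z"
proof -
  have "\<alpha> * cnj \<alpha> = 1"
    using assms complex_norm_square[of \<alpha>] by simp
  then have "\<alpha> * z + w = \<alpha> * (z + cnj \<alpha> * w)" and "cnj w * (\<alpha> * z) = \<alpha> * cnj w * z"
    by (simp_all add: algebra_simps)
  then show ?thesis
    by (simp add: Moebius_function_def)
qed

lemma norm_Moebius_function_antipodal:
  "cmod (Moebius_function 0 a (- a)) = 2 * cmod a / (1 + (cmod a)\<^sup>2)"
proof -
  have "1 + cnj a * a = of_real (1 + (cmod a)\<^sup>2)"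
    using complex_norm_square[of a] by (simp add: mult.commute)
  then have "cmod (1 + cnj a * a) = \<bar>1 + (cmod a)\<^sup>2\<bar>"
    by (simp only: norm_of_real)
  then have "cmod (1 + cnj a * a) = 1 + (cmod a)\<^sup>2"
    by simp
  then show ?thesis
    by (simp add: Moebius_function_def norm_divide norm_mult)
qed

lemma norm_Moebius_function_inverse_diff_le:
  assumes "cmod w < 1" and "cmod k < 1"
  shows "cmod (Moebius_function 0 (- w) k - w) \<le> cmod k * (1 - (cmod w)\<^sup>2) / (1 - cmod k)"
proof -
  have "cmod (cnj w * k) \<le> cmod k"
    using assms by (simp add: norm_mult mult_left_le_one_le)
  then have den: "1 - cmod k \<le> cmod (1 + cnj w * k)"
    using norm_triangle_ineq4[of "1 + cnj w * k" "cnj w * k"] by simp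
  with assms have den0: "1 + cnj w * k \<noteq> 0" by auto
  have "Moebius_function 0 (- w) k - w = k * (1 - w * cnj w) / (1 + cnj w * k)"
    using den0 by (simp add: Moebius_function_def field_simps)
  moreover have "cmod (1 - w * cnj w) = 1 - (cmod w)\<^sup>2"
  proof -
    have "1 - w * cnj w = of_real (1 - (cmod w)\<^sup>2)"
      using complex_norm_square[of w] by simp
    then have "cmod (1 - w * cnj w) = \<bar>1 - (cmod w)\<^sup>2\<bar>"
      by (simp only: norm_of_real)
    with assms(1) show ?thesis
      by (simp add: power_le_one)
  qed
  ultimately have "cmod (Moebius_function 0 (- w) k - w)
      = cmod k * (1 - (cmod w)\<^sup>2) / cmod (1 + cnj w * k)"
    by (simp add: norm_mult norm_divide)
  also have "\<dots> \<le> cmod k * (1 - (cmod w)\<^sup>2) / (1 - cmod k)"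
    using assms den by (intro divide_left_mono mult_nonneg_nonneg)
      (auto simp: abs_square_le_1 less_imp_le intro!: mult_pos_pos)
  finally show ?thesis .
qed

definition disk_swap :: "complex \<Rightarrow> complex \<Rightarrow> complex" where
  "disk_swap z w = - Moebius_function 0 z w"

lemma disk_swap_0 [simp]: "disk_swap z 0 = z"
  by (simp add: disk_swap_def Moebius_function_of_zero)

lemma disk_swap_self [simp]: "disk_swap z z = 0"
  by (simp add: disk_swap_def Moebius_function_eq_zero)

lemma disk_swap_in_ball: "cmod z < 1 \<Longrightarrow> w \<in> ball 0 1 \<Longrightarrow> disk_swap z w \<in> ball 0 1"
  using Moebius_function_norm_lt_1[of z w 0] by (simp add: disk_swap_def)

lemma disk_swap_disk_swap: "cmod z < 1 \<Longrightarrow> w \<in> ball 0 1 \<Longrightarrow> disk_swap z (disk_swap z w) = w"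
  by (simp add: disk_swap_def Moebius_function_uminus Moebius_function_compose)

lemma holomorphic_on_disk_swap: "cmod z < 1 \<Longrightarrow> disk_swap z holomorphic_on ball 0 1"
  unfolding disk_swap_def[abs_def]
  using Moebius_function_holomorphic by (auto intro!: holomorphic_intros)

lemma unit_ball_selfmap_const_if_norm_eq_1:
  assumes "g holomorphic_on ball 0 1" and "\<And>w. w \<in> ball 0 1 \<Longrightarrow> cmod (g w) \<le> 1"
    and "w1 \<in> ball 0 1" "cmod (g w1) = 1" and "w \<in> ball 0 1"
  shows "g w = g w1"
proof -
  have "g constant_on ball 0 1"
    by (rule maximum_modulus_principle[OF assms(1) open_ball connected_ball open_ball order_refl assms(3)])
      (use assms in auto)
  with assms(3,5) show ?thesis
    unfolding constant_on_def by metis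
qed

lemma Schwarz_Lemma_norm_le:
  assumes "f holomorphic_on ball 0 1" and "f 0 = 0"
    and "\<And>z. norm z < 1 \<Longrightarrow> norm (f z) \<le> 1" and "norm \<xi> < 1"
  shows "norm (f \<xi>) \<le> norm \<xi>"
proof (rule field_le_mult_one_interval)
  fix t :: real assume t: "0 < t" "t < 1"
  have "norm (t * f z) < 1" if "norm z < 1" for z
  proof -
    have "norm (t * f z) = t * norm (f z)"
      using t by (simp add: norm_mult)
    also have "\<dots> \<le> t"
      using assms(3)[OF that] t by (simp add: mult_left_le)
    finally show ?thesis
      using t by simp
  qed
  then have "norm (of_real t * f \<xi>) \<le> norm \<xi>"
    by (intro Schwarz_Lemma(1)[where f="\<lambda>z. t * f z"] holomorphic_intros assms) (auto simp: assms(2))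
  with t show "t * norm (f \<xi>) \<le> norm \<xi>"
    by (simp add: norm_mult)
qed

lemma Schwarz_Pick_Moebius:
  assumes hol: "g holomorphic_on ball 0 1" and lt: "\<And>w. w \<in> ball 0 1 \<Longrightarrow> cmod (g w) < 1"
    and u: "u \<in> ball 0 1"
  shows "cmod (Moebius_function 0 (g 0) (g u)) \<le> cmod u"
    and "u \<noteq> 0 \<Longrightarrow> cmod (Moebius_function 0 (g 0) (g u)) = cmod u \<Longrightarrow>
          \<exists>\<alpha>. cmod \<alpha> = 1 \<and> (\<forall>w\<in>ball 0 1. Moebius_function 0 (g 0) (g w) = \<alpha> * w)"
proof -
  define k where "k = Moebius_function 0 (g 0) \<circ> g"
  have g0: "cmod (g 0) < 1" using lt by simp
  have holk: "k holomorphic_on ball 0 1" unfolding k_def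
    by (rule holomorphic_on_compose_gen[OF hol Moebius_function_holomorphic[OF g0]]) (use lt in auto)
  have k0: "k 0 = 0" by (simp add: k_def Moebius_function_eq_zero)
  have k_lt: "\<And>z. norm z < 1 \<Longrightarrow> norm (k z) < 1"
    using lt g0 Moebius_function_norm_lt_1 by (simp add: k_def)
  have un: "norm u < 1" using u by simp
  note Schwarz = Schwarz_Lemma[OF holk k0 k_lt un]
  show "cmod (Moebius_function 0 (g 0) (g u)) \<le> cmod u"
    using Schwarz(1) by (simp add: k_def)
  assume "u \<noteq> 0" "cmod (Moebius_function 0 (g 0) (g u)) = cmod u"
  then obtain \<alpha> where "\<forall>z. norm z < 1 \<longrightarrow> k z = \<alpha> * z" "norm \<alpha> = 1"
    using Schwarz(3) un by (auto simp: k_def)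
  then show "\<exists>\<alpha>. cmod \<alpha> = 1 \<and> (\<forall>w\<in>ball 0 1. Moebius_function 0 (g 0) (g w) = \<alpha> * w)"
    by (auto simp: k_def)
qed

lemma Schwarz_Pick_norm_diff_le:
  assumes hol: "W holomorphic_on ball 0 1" and lt: "\<And>w. w \<in> ball 0 1 \<Longrightarrow> cmod (W w) < 1"
    and u: "u \<in> ball 0 1"
  shows "cmod (W u - W 0) \<le> cmod u * (1 - (cmod (W 0))\<^sup>2) / (1 - cmod u)"
proof -
  define k where "k = Moebius_function 0 (W 0) (W u)"
  have W0: "cmod (W 0) < 1"
    using lt by simp
  have k_le: "cmod k \<le> cmod u"
    unfolding k_def by (rule Schwarz_Pick_Moebius(1)[OF hol lt u])
  have "W u = Moebius_function 0 (- W 0) k"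
    unfolding k_def by (rule Moebius_function_compose[symmetric]) (use W0 lt u in auto)
  then have "cmod (W u - W 0) \<le> cmod k * (1 - (cmod (W 0))\<^sup>2) / (1 - cmod k)"
    using W0 k_le u by (auto intro: norm_Moebius_function_inverse_diff_le)
  also have "\<dots> \<le> cmod u * (1 - (cmod (W 0))\<^sup>2) / (1 - cmod u)"
    using k_le u W0 by (intro frac_le mult_right_mono) (auto simp: abs_square_le_1 less_imp_le)
  finally show ?thesis .
qed

lemma Schwarz_Lemma_second_order:
  assumes hol: "G holomorphic_on ball 0 1" and G0: "G 0 = 0"
    and le: "\<And>z. norm z < 1 \<Longrightarrow> norm (G z) \<le> 1"
    and d: "cmod (deriv G 0) < 1" and u: "u \<in> ball 0 1"
  shows "cmod (G u - deriv G 0 * u) \<le> (cmod u)\<^sup>2 * (1 - (cmod (deriv G 0))\<^sup>2) / (1 - cmod u)"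
proof -
  obtain h where holh: "h holomorphic_on ball 0 1"
    and Gh: "\<And>z. norm z < 1 \<Longrightarrow> G z = z * h z" and h0: "deriv G 0 = h 0"
    using Schwarz3[OF hol G0] by blast
  have h_le: "cmod (h z) \<le> 1" if "z \<in> ball 0 1" for z
  proof (cases "z = 0")
    case True
    with d h0 show ?thesis by simp
  next
    case False
    have "cmod z * cmod (h z) \<le> cmod z"
      using Schwarz_Lemma_norm_le[OF hol G0 le, of z] Gh[of z] that by (simp add: norm_mult)
    with False show ?thesis by simp
  qed
  have h_lt: "cmod (h z) < 1" if "z \<in> ball 0 1" for z
  proof (rule ccontr)
    assume "\<not> ?thesis"
    with h_le[OF that] have "cmod (h z) = 1" by simp
    with unit_ball_selfmap_const_if_norm_eq_1[OF holh h_le that, of 0] d h0 show False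
      by simp
  qed
  have "G u - deriv G 0 * u = u * (h u - h 0)"
    using Gh u h0 by (simp add: algebra_simps)
  then have "cmod (G u - deriv G 0 * u) = cmod u * cmod (h u - h 0)"
    by (simp add: norm_mult)
  also have "\<dots> \<le> cmod u * (cmod u * (1 - (cmod (h 0))\<^sup>2) / (1 - cmod u))"
    by (intro mult_left_mono Schwarz_Pick_norm_diff_le[OF holh h_lt u]) auto
  finally show ?thesis
    using h0 by (simp add: power2_eq_square)
qed

lemma vector_derivative_eq_0_if_quadratic_bound:
  fixes \<gamma> :: "real \<Rightarrow> 'a::real_normed_vector"
  assumes der: "(\<gamma> has_vector_derivative D) (at 0)"
    and bound: "\<And>t. norm (\<gamma> t - \<gamma> 0) \<le> C * t\<^sup>2"
  shows "D = 0"
proof -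
  have "((\<lambda>t. norm (\<gamma> t - \<gamma> 0) / norm t) \<longlongrightarrow> 0) (at 0)"
  proof (rule Lim_null_comparison)
    show "\<forall>\<^sub>F t in at 0. norm (norm (\<gamma> t - \<gamma> 0) / norm t) \<le> C * \<bar>t\<bar>"
      using bound by (intro always_eventually allI) (simp add: divide_le_eq abs_mult power2_eq_square mult.assoc)
    show "((\<lambda>t. C * \<bar>t\<bar>) \<longlongrightarrow> 0) (at (0::real))"
      by (auto intro!: tendsto_eq_intros)
  qed
  then have "(\<gamma> has_vector_derivative 0) (at 0)"
    by (simp add: has_vector_derivative_def has_derivative_iff_norm)
  with der show ?thesis by (rule vector_derivative_unique_at)
qed

lemma holomorphic_constant_if_rotation_bound:
  fixes q :: "complex \<Rightarrow> complex"
  assumes hol: "q holomorphic_on ball 0 1"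
    and bound: "\<And>u t. u \<in> ball 0 1 \<Longrightarrow> cmod (q (cis t * u) - q u) \<le> C u * t\<^sup>2"
  shows "q constant_on ball 0 1"
proof (rule DERIV_zero_connected_constant_on[where K="{0}" and f=q])
  show "continuous_on (ball 0 1) q"
    using hol by (rule holomorphic_on_imp_continuous_on)
  show "\<forall>u\<in>ball 0 1 - {0}. (q has_field_derivative 0) (at u)"
  proof
    fix u :: complex assume u: "u \<in> ball 0 1 - {0}"
    have dq: "(q has_field_derivative deriv q u) (at (cis 0 * u))"
      using holomorphic_derivI[OF hol open_ball] u by simp
    have "((\<lambda>t. cis t * u) has_vector_derivative \<i> * u) (at 0)"
      unfolding has_vector_derivative_def by (auto intro!: derivative_eq_intros)
    from field_vector_diff_chain_at[OF this dq]
    have "((\<lambda>t. q (cis t * u)) has_vector_derivative \<i> * u * deriv q u) (at 0)"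
      by (simp add: o_def)
    then have "\<i> * u * deriv q u = 0"
      by (rule vector_derivative_eq_0_if_quadratic_bound[where C="C u"]) (use bound u in simp)
    then show "(q has_field_derivative 0) (at u)"
      using u holomorphic_derivI[OF hol open_ball, of u] by simp
  qed
qed auto

lemma deriv_0_eq_1_if_odd_part_identity:
  assumes holF: "F holomorphic_on ball 0 1"
    and odd: "\<And>a. a \<in> ball 0 1 \<Longrightarrow> F a - F (-a) = 2 * a"
  shows "deriv F 0 = 1"
proof -
  have dF: "(F has_field_derivative deriv F 0) (at 0)"
    using holomorphic_derivI[OF holF open_ball, of 0] by simp
  have "((\<lambda>a. F (-a)) has_field_derivative deriv F 0 * (-1)) (at 0)"
    by (rule DERIV_chain2[where f=F]) (use dF in \<open>auto intro!: derivative_eq_intros\<close>)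
  with dF have "((\<lambda>a. F a - F (-a)) has_field_derivative 2 * deriv F 0) (at 0)"
    by (auto dest: DERIV_diff)
  then have "((\<lambda>a. 2 * a) has_field_derivative 2 * deriv F 0) (at 0)"
    by (rule has_field_derivative_transform_within_open[where S="ball 0 1"]) (use odd in auto)
  moreover have "((\<lambda>a. 2 * a) has_field_derivative 2) (at (0::complex))"
    by (auto intro!: derivative_eq_intros)
  ultimately show ?thesis
    using DERIV_unique by fastforce
qed

lemma odd_part_identity_rotation_defect_le:
  assumes holF: "F holomorphic_on ball 0 1" and diam: "Diam_le F (ball 0 1) 2"
    and odd: "\<And>a. a \<in> ball 0 1 \<Longrightarrow> F a - F (-a) = 2 * a"
    and l: "cmod l = 1" and u: "u \<in> ball 0 1"
  shows "cmod ((F (l * u) - l * u) - (F u - u)) \<le> (1 - Re l) / (1 - cmod u)"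
proof (cases "l = 1")
  case True
  then show ?thesis by simp
next
  case False
  define G where "G a = (F a - F (-l * a)) / 2" for a
  have dF: "(F has_field_derivative 1) (at 0)"
    using holomorphic_derivI[OF holF open_ball, of 0] deriv_0_eq_1_if_odd_part_identity[OF holF odd]
    by simp
  have "((\<lambda>a. F (-l * a)) has_field_derivative 1 * (-l)) (at 0)"
    by (rule DERIV_chain2[where f=F]) (use dF in \<open>auto intro!: derivative_eq_intros\<close>)
  with dF have "(G has_field_derivative (1 + l) / 2) (at 0)"
    unfolding G_def[abs_def] by (auto intro!: derivative_eq_intros)
  then have dG: "deriv G 0 = (1 + l) / 2"
    by (rule DERIV_imp_deriv)
  have holG: "G holomorphic_on ball 0 1"
  proof -
    have "(F \<circ> (\<lambda>a. -l * a)) holomorphic_on ball 0 1"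
      by (rule holomorphic_on_compose_gen[OF _ holF]) (auto intro!: holomorphic_intros simp: norm_mult l)
    then show ?thesis
      unfolding G_def[abs_def] using holF by (auto intro!: holomorphic_intros simp: o_def)
  qed
  have G_le: "cmod (G a) \<le> 1" if "cmod a < 1" for a
    using diam that unfolding G_def Diam_le_def by (simp add: norm_mult norm_divide l)
  have dG_lt: "cmod (deriv G 0) < 1"
    unfolding dG by (rule norm_unimodular_midpoint(2)[OF l False])
  \<comment> \<open>the rotation defect is the deviation of G from its linearisation, by oddness at l u\<close>
  have "(F (l * u) - l * u) - (F u - u) = 2 * (deriv G 0 * u - G u)"
    using odd[of "l * u"] u by (simp add: G_def dG norm_mult l field_simps)
  then have "cmod ((F (l * u) - l * u) - (F u - u)) = 2 * cmod (G u - deriv G 0 * u)"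
    by (simp only: norm_mult norm_minus_commute) simp
  also have "\<dots> \<le> 2 * ((cmod u)\<^sup>2 * (1 - (cmod (deriv G 0))\<^sup>2) / (1 - cmod u))"
    using Schwarz_Lemma_second_order[OF holG _ G_le dG_lt u] by (simp add: G_def)
  also have "\<dots> \<le> 2 * ((1 - (cmod (deriv G 0))\<^sup>2) / (1 - cmod u))"
    using u dG_lt
    by (intro mult_left_mono divide_right_mono mult_left_le_one_le) (auto simp: abs_square_le_1)
  also have "\<dots> = 2 * (1 - (cmod (deriv G 0))\<^sup>2) / (1 - cmod u)"
    by simp
  also have "2 * (1 - (cmod (deriv G 0))\<^sup>2) = 1 - Re l"
    unfolding dG norm_unimodular_midpoint(1)[OF l] by (simp add: field_simps)
  finally show ?thesis .
qed

lemma translation_if_odd_part_identity: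
  assumes holF: "F holomorphic_on ball 0 1" and diam: "Diam_le F (ball 0 1) 2"
    and odd: "\<And>a. a \<in> ball 0 1 \<Longrightarrow> F a - F (-a) = 2 * a"
  obtains K where "\<And>a. a \<in> ball 0 1 \<Longrightarrow> F a = a + K"
proof -
  have "(\<lambda>a. F a - a) constant_on ball 0 1"
  proof (rule holomorphic_constant_if_rotation_bound)
    show "(\<lambda>a. F a - a) holomorphic_on ball 0 1"
      by (intro holomorphic_intros holF)
    fix u :: complex and t :: real
    assume u: "u \<in> ball 0 1"
    have "cmod ((F (cis t * u) - cis t * u) - (F u - u)) \<le> (1 - cos t) / (1 - cmod u)"
      using odd_part_identity_rotation_defect_le[OF holF diam odd _ u, of "cis t"] by simp
    also have "\<dots> \<le> (t\<^sup>2 / 2) / (1 - cmod u)"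
      using u one_minus_cos_le_half_square[of t] by (intro divide_right_mono) auto
    finally show "cmod ((F (cis t * u) - cis t * u) - (F u - u)) \<le> 1 / (2 * (1 - cmod u)) * t\<^sup>2"
      by simp
  qed
  then show ?thesis
    using that unfolding constant_on_def by (metis diff_add_cancel add.commute)
qed

lemma Moebius_plus_const_if_odd_part_Moebius:
  fixes f \<sigma> :: "complex \<Rightarrow> complex"
  assumes hol: "f holomorphic_on ball 0 1" and diam: "Diam_le f (ball 0 1) 2"
    and w: "cmod w < 1" and \<alpha>: "cmod \<alpha> = 1"
    and \<sigma>_in: "\<And>x. x \<in> ball 0 1 \<Longrightarrow> \<sigma> x \<in> ball 0 1"
    and \<sigma>_\<sigma>: "\<And>x. x \<in> ball 0 1 \<Longrightarrow> \<sigma> (\<sigma> x) = x"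
    and odd: "\<And>x. x \<in> ball 0 1 \<Longrightarrow> f x - f (\<sigma> x) = 2 * Moebius_function 0 (- w) (\<alpha> * x)"
  obtains K where "\<And>x. x \<in> ball 0 1 \<Longrightarrow> f x = Moebius_function 0 (- w) (\<alpha> * x) + K"
proof -
  define g where "g x = Moebius_function 0 (- w) (\<alpha> * x)" for x
  define \<psi> where "\<psi> a = cnj \<alpha> * Moebius_function 0 w a" for a
  have \<alpha>\<alpha>: "\<alpha> * cnj \<alpha> = 1"
    using \<alpha> complex_norm_square[of \<alpha>] by simp
  have \<psi>_in: "\<psi> a \<in> ball 0 1" if "a \<in> ball 0 1" for a
    using Moebius_function_norm_lt_1[OF w, of a 0] that \<alpha> by (simp add: \<psi>_def norm_mult)
  have g_\<psi>: "g (\<psi> a) = a" if "a \<in> ball 0 1" for a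
    using that w \<alpha>\<alpha> by (simp add: g_def \<psi>_def mult.assoc[symmetric] Moebius_function_compose)
  have \<psi>_g: "\<psi> (g x) = x" if "x \<in> ball 0 1" for x
  proof -
    have "Moebius_function 0 w (g x) = \<alpha> * x"
      using that w \<alpha> by (simp add: g_def Moebius_function_compose norm_mult)
    then show ?thesis
      by (simp add: \<psi>_def mult.assoc[symmetric] mult.commute[of "cnj \<alpha>"] \<alpha>\<alpha>)
  qed
  define F where "F = f \<circ> \<psi>"
  have holF: "F holomorphic_on ball 0 1"
    unfolding F_def \<psi>_def[abs_def]
    by (rule holomorphic_on_compose_gen[OF _ hol])
      (use Moebius_function_holomorphic[OF w] \<psi>_in in \<open>auto intro!: holomorphic_intros simp: \<psi>_def\<close>)
  have diamF: "Diam_le F (ball 0 1) 2"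
    using diam \<psi>_in unfolding Diam_le_def F_def by simp
  have oddF: "F a - F (-a) = 2 * a" if a: "a \<in> ball 0 1" for a
  proof -
    define x where "x = \<psi> a"
    have x: "x \<in> ball 0 1" "g x = a"
      using \<psi>_in[OF a] g_\<psi>[OF a] by (simp_all add: x_def)
    have "f x - f (\<sigma> x) = 2 * g x" and "f (\<sigma> x) - f x = 2 * g (\<sigma> x)"
      using odd[OF x(1)] odd[OF \<sigma>_in[OF x(1)]] \<sigma>_\<sigma>[OF x(1)] by (simp_all add: g_def)
    then have "g (\<sigma> x) = - a"
      using x(2) by (simp add: algebra_simps)
    then have "\<psi> (- a) = \<sigma> x"
      using \<psi>_g[OF \<sigma>_in[OF x(1)]] by simp
    then show ?thesis
      using \<open>f x - f (\<sigma> x) = 2 * g x\<close> x(2) by (simp add: F_def x_def)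
  qed
  obtain K where K: "\<And>a. a \<in> ball 0 1 \<Longrightarrow> F a = a + K"
    using translation_if_odd_part_identity[OF holF diamF oddF] by blast
  have "f x = g x + K" if x: "x \<in> ball 0 1" for x
  proof -
    have "g x \<in> ball 0 1"
      using Moebius_function_norm_lt_1[of "- w" "\<alpha> * x" 0] w x \<alpha> by (simp add: g_def norm_mult)
    then show ?thesis
      using K[of "g x"] \<psi>_g[OF x] by (simp add: F_def)
  qed
  then show ?thesis
    using that by (simp add: g_def)
qed

lemma disk_swap_odd_part_selfmap:
  fixes f :: "complex \<Rightarrow> complex"
  assumes hol: "f holomorphic_on ball 0 1" and diam: "Diam_le f (ball 0 1) 2"
    and z: "z \<in> ball 0 1" and ne: "f z \<noteq> f 0"
    and g_def: "g = (\<lambda>w. (f w - f (disk_swap z w)) / 2)"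
  shows "g holomorphic_on ball 0 1" and "\<And>w. w \<in> ball 0 1 \<Longrightarrow> cmod (g w) < 1"
proof -
  have zn: "cmod z < 1"
    using z by simp
  have "(f \<circ> disk_swap z) holomorphic_on ball 0 1"
    by (rule holomorphic_on_compose_gen[OF holomorphic_on_disk_swap[OF zn] hol])
      (use disk_swap_in_ball[OF zn] in auto)
  then show holg: "g holomorphic_on ball 0 1"
    unfolding g_def using hol by (auto intro!: holomorphic_intros simp: o_def)
  have g_le: "cmod (g w) \<le> 1" if "w \<in> ball 0 1" for w
    using diam disk_swap_in_ball[OF zn that] that unfolding Diam_le_def by (simp add: g_def norm_divide)
  show "cmod (g w) < 1" if w: "w \<in> ball 0 1" for w
  proof (rule ccontr)
    assume "\<not> ?thesis"
    with g_le[OF w] have "cmod (g w) = 1" by simp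
    then have "g z = g 0"
      using unit_ball_selfmap_const_if_norm_eq_1[OF holg g_le w] z
      by (metis centre_in_ball zero_less_one)
    with ne show False
      by (simp add: g_def)
  qed
qed

lemma diam_le_2_pseudo_hyperbolic_bound:
  fixes f :: "complex \<Rightarrow> complex"
  assumes hol: "f holomorphic_on ball 0 1" and diam: "Diam_le f (ball 0 1) 2"
    and z: "z \<in> ball 0 1" "z \<noteq> 0"
  defines "s \<equiv> cmod (f z - f 0) / 2"
  shows "2 * s \<le> cmod z * (1 + s\<^sup>2)"
    and "2 * s = cmod z * (1 + s\<^sup>2) \<Longrightarrow> s \<noteq> 0 \<Longrightarrow>
      \<exists>a b c. b \<in> ball 0 1 - {0} \<and> cmod c = 1 \<and> (\<forall>w\<in>ball 0 1. f w = c * Moebius_function 0 b w + a)"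
proof -
  have zn: "cmod z < 1"
    using z by simp
  define g where "g = (\<lambda>w. (f w - f (disk_swap z w)) / 2)"
  note g_selfmap = disk_swap_odd_part_selfmap[OF hol diam z(1) _ g_def]
  have "f 0 - f z = 2 * g 0"
    by (simp add: g_def)
  then have s: "s = cmod (g 0)"
    unfolding s_def norm_minus_commute[of "f z"] by (simp add: norm_mult)
  have "g z = - g 0"
    by (simp add: g_def field_simps)
  then have M: "cmod (Moebius_function 0 (g 0) (g z)) = 2 * s / (1 + s\<^sup>2)"
    unfolding s by (simp add: norm_Moebius_function_antipodal)
  have pos: "0 < 1 + s\<^sup>2"
    by (simp add: add_pos_nonneg)
  show "2 * s \<le> cmod z * (1 + s\<^sup>2)"
  proof (cases "f z = f 0")
    case False
    then have "2 * s / (1 + s\<^sup>2) \<le> cmod z"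
      using Schwarz_Pick_Moebius(1)[OF g_selfmap[OF False] z(1)] M by simp
    with pos show ?thesis
      by (simp add: divide_le_eq)
  qed (simp add: s_def)
  assume eq: "2 * s = cmod z * (1 + s\<^sup>2)" and s0: "s \<noteq> 0"
  then have ne: "f z \<noteq> f 0"
    by (auto simp: s_def)
  note g_selfmap = g_selfmap[OF ne]
  from eq pos have "cmod (Moebius_function 0 (g 0) (g z)) = cmod z"
    unfolding M by (simp add: divide_eq_eq)
  then obtain \<alpha> where \<alpha>: "cmod \<alpha> = 1"
    and g_Moebius: "\<And>w. w \<in> ball 0 1 \<Longrightarrow> Moebius_function 0 (g 0) (g w) = \<alpha> * w"
    using Schwarz_Pick_Moebius(2)[OF g_selfmap z] by blast
  have g0: "cmod (g 0) < 1"
    using g_selfmap(2)[of 0] by simp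
  have "f w - f (disk_swap z w) = 2 * Moebius_function 0 (- g 0) (\<alpha> * w)" if "w \<in> ball 0 1" for w
  proof -
    have "g w = Moebius_function 0 (- g 0) (\<alpha> * w)"
      using Moebius_function_compose[of "- g 0" "g 0" "g w"] g_Moebius[OF that] g0 g_selfmap(2)[OF that]
      by simp
    then show ?thesis
      by (simp add: g_def)
  qed
  then obtain K where K: "\<And>w. w \<in> ball 0 1 \<Longrightarrow> f w = Moebius_function 0 (- g 0) (\<alpha> * w) + K"
    using Moebius_plus_const_if_odd_part_Moebius[OF hol diam g0 \<alpha> disk_swap_in_ball[OF zn] disk_swap_disk_swap[OF zn]]
    by blast
  have "- cnj \<alpha> * g 0 \<in> ball 0 1 - {0}"
    using g0 s0 s \<alpha> by (auto simp: norm_mult)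
  moreover have "f w = \<alpha> * Moebius_function 0 (- cnj \<alpha> * g 0) w + K" if "w \<in> ball 0 1" for w
    using K[OF that] Moebius_function_rotation[OF \<alpha>] by simp
  ultimately show "\<exists>a b c. b \<in> ball 0 1 - {0} \<and> cmod c = 1 \<and>
      (\<forall>w\<in>ball 0 1. f w = c * Moebius_function 0 b w + a)"
    using \<alpha> by blast
qed

lemma diam_le_2_sharp_bound:
  fixes f :: "complex \<Rightarrow> complex"
  assumes hol: "f holomorphic_on ball 0 1" and diam: "Diam_le f (ball 0 1) 2"
    and z: "z \<in> ball 0 1" "z \<noteq> 0"
  shows "cmod (f z - f 0) \<le> cmod z * (2 / (1 + sqrt (1 - (cmod z)\<^sup>2)))"
    and "cmod (f z - f 0) = cmod z * (2 / (1 + sqrt (1 - (cmod z)\<^sup>2))) \<Longrightarrow>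
      \<exists>a b c. b \<in> ball 0 1 - {0} \<and> cmod c = 1 \<and> (\<forall>w\<in>ball 0 1. f w = c * Moebius_function 0 b w + a)"
proof -
  define s where "s = cmod (f z - f 0) / 2"
  define \<rho> where "\<rho> = cmod z / (1 + sqrt (1 - (cmod z)\<^sup>2))"
  have r: "0 < cmod z" "cmod z < 1"
    using z by auto
  have "s \<le> 1"
    using diam z(1) unfolding Diam_le_def s_def by simp
  note root_iff = le_smaller_root_iff[OF this r, folded \<rho>_def]
  have scale: "cmod z * (2 / (1 + sqrt (1 - (cmod z)\<^sup>2))) = 2 * \<rho>"
    by (simp add: \<rho>_def)
  show "cmod (f z - f 0) \<le> cmod z * (2 / (1 + sqrt (1 - (cmod z)\<^sup>2)))"
    using diam_le_2_pseudo_hyperbolic_bound(1)[OF hol diam z] root_iff(1)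
    unfolding scale s_def by simp
  assume "cmod (f z - f 0) = cmod z * (2 / (1 + sqrt (1 - (cmod z)\<^sup>2)))"
  then have "s = \<rho>"
    unfolding scale s_def by simp
  moreover have "0 < \<rho>"
    using r by (simp add: \<rho>_def add_pos_nonneg power_le_one)
  ultimately show "\<exists>a b c. b \<in> ball 0 1 - {0} \<and> cmod c = 1 \<and>
      (\<forall>w\<in>ball 0 1. f w = c * Moebius_function 0 b w + a)"
    using diam_le_2_pseudo_hyperbolic_bound(2)[OF hol diam z] root_iff(2)
    unfolding s_def by simp
qed

lemma Moebius_attains_bound:
  fixes f :: "complex \<Rightarrow> complex"
  assumes b: "b \<in> ball 0 1 - {0}" and c: "cmod c = 1"
    and f: "\<And>w. w \<in> ball 0 1 \<Longrightarrow> f w = c * Moebius_function 0 b w + a"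
  shows "\<exists>z\<in>ball 0 1 - {0}. cmod (f z - f 0) = cmod z * (2 / (1 + sqrt (1 - (cmod z)\<^sup>2)))"
proof -
  define t where "t = cmod b"
  have t: "0 < t" "t < 1"
    using b by (auto simp: t_def)
  define \<beta> where "\<beta> = 2 / (1 + t\<^sup>2)"
  define z where "z = of_real \<beta> * b"
  have "0 < 1 + t\<^sup>2"
    by (simp add: add_pos_nonneg)
  then have \<beta>: "\<beta> * (1 + t\<^sup>2) = 2" "0 < \<beta>"
    by (simp_all add: \<beta>_def field_simps)
  have "0 < (1 - t)\<^sup>2"
    using t by simp
  then have "\<beta> * t < 1"
    using \<open>0 < 1 + t\<^sup>2\<close> by (simp add: \<beta>_def field_simps power2_eq_square algebra_simps)
  moreover have nz: "cmod z = \<beta> * t"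
    using \<beta>(2) by (simp add: z_def norm_mult t_def)
  ultimately have r: "0 < cmod z" "cmod z < 1"
    using \<beta>(2) t by simp_all
  have num: "z - b = of_real (\<beta> - 1) * b"
    by (simp add: z_def algebra_simps)
  have "1 - cnj b * z = of_real (1 - \<beta> * t\<^sup>2)"
    using complex_norm_square[of b] by (simp add: z_def t_def mult_ac)
  also have "1 - \<beta> * t\<^sup>2 = \<beta> - 1"
    using \<beta>(1) by (simp add: algebra_simps)
  finally have den: "1 - cnj b * z = of_real (\<beta> - 1)" .
  have "\<beta> \<noteq> 1"
    using \<beta>(1) t by (auto simp: abs_square_eq_1)
  then have "Moebius_function 0 b z = b"
    unfolding Moebius_function_simple num den by simp
  then have "cmod (f z - f 0) = 2 * t"
    using f[of z] f[of 0] r c by (simp add: Moebius_function_of_zero norm_mult t_def)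
  moreover have "cmod z * (1 + t\<^sup>2) = t * (\<beta> * (1 + t\<^sup>2))"
    unfolding nz by (simp only: mult_ac)
  then have "2 * t = cmod z * (1 + t\<^sup>2)"
    using \<beta>(1) by simp
  then have "t = cmod z / (1 + sqrt (1 - (cmod z)\<^sup>2))"
    using le_smaller_root_iff(2)[OF _ r] t by simp
  ultimately show ?thesis
    using r by (intro bexI[of _ z]) (auto simp: field_simps)
qed

theorem theorem8p1:
  fixes f :: "complex \<Rightarrow> complex"
  assumes "f analytic_on ball 0 1"
    and "Diam_le f (ball 0 1) 2"
  shows "(\<forall>z\<in>ball 0 1. cmod (f z - f 0) \<le> cmod z * (2 / (1 + sqrt (1 - (cmod z)\<^sup>2))))
    \<and> ((\<exists>z\<in>ball 0 1 - {0}. cmod (f z - f 0) = cmod z * (2 / (1 + sqrt (1 - (cmod z)\<^sup>2))))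
        \<longleftrightarrow> (\<exists>a b c. b \<in> ball 0 1 - {0} \<and> cmod c = 1 \<and>
              (\<forall>z\<in>ball 0 1. f z = c * ((z - b) / (1 - cnj b * z)) + a)))"
  unfolding Moebius_function_simple[symmetric]
proof (intro conjI iffI ballI)
  have hol: "f holomorphic_on ball 0 1"
    using assms(1) by (rule analytic_imp_holomorphic)
  show "cmod (f z - f 0) \<le> cmod z * (2 / (1 + sqrt (1 - (cmod z)\<^sup>2)))" if "z \<in> ball 0 1" for z
    using diam_le_2_sharp_bound(1)[OF hol assms(2) that] by (cases "z = 0") simp_all
  assume "\<exists>z\<in>ball 0 1 - {0}. cmod (f z - f 0) = cmod z * (2 / (1 + sqrt (1 - (cmod z)\<^sup>2)))"
  then obtain z where z: "z \<in> ball 0 1" "z \<noteq> 0"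
    and eq: "cmod (f z - f 0) = cmod z * (2 / (1 + sqrt (1 - (cmod z)\<^sup>2)))"
    by blast
  show "\<exists>a b c. b \<in> ball 0 1 - {0} \<and> cmod c = 1 \<and> (\<forall>z\<in>ball 0 1. f z = c * Moebius_function 0 b z + a)"
    using diam_le_2_sharp_bound(2)[OF hol assms(2) z eq] .
next
  assume "\<exists>a b c. b \<in> ball 0 1 - {0} \<and> cmod c = 1 \<and> (\<forall>z\<in>ball 0 1. f z = c * Moebius_function 0 b z + a)"
  then show "\<exists>z\<in>ball 0 1 - {0}. cmod (f z - f 0) = cmod z * (2 / (1 + sqrt (1 - (cmod z)\<^sup>2)))"
    using Moebius_attains_bound by blast
qed

end
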